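(* Let $\mathcal H$ be a complex Hilbert space, let $a \in (\tfrac12, \infty) \setminus \{1\}$, and let $X, Y$ be finite-dimensional subspaces of $\mathcal H$ with $S_a(X,Y) \ne \emptyset$. Then there exists $k \in \mathbb N \cup \{0\}$, $k \le \dim \mathcal H$, such that $\dim X = \dim Y = k$ and $\dim Z = k$ for every $Z \in S_a(X,Y)$.
   Context: For a closed subspace $X$ of $\mathcal H$, $P_X$ is the orthogonal projection onto $X$. For finite-dimensional subspaces $X,Y$ and $a\in\mathbb R$, $S_a(X,Y)$ denotes the set of all finite-dimensional subspaces $Z$ of $\mathcal H$ such that $a(P_X+P_Y)+(1-2a)P_Z$ is a finite-rank (self-adjoint, idempotent) projection. *)

theory Defs
  imports "HOL-Analysis.Analysis"
begin

class complex_vector = real_vector +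
  fixes scaleC :: "complex \<Rightarrow> 'a \<Rightarrow> 'a" (infixr \<open>*\<^sub>C\<close> 75)
  assumes scaleC_add_right: "c *\<^sub>C (x + y) = c *\<^sub>C x + c *\<^sub>C y"
    and scaleC_add_left: "(c + d) *\<^sub>C x = c *\<^sub>C x + d *\<^sub>C x"
    and scaleC_scaleC: "c *\<^sub>C (d *\<^sub>C x) = (c * d) *\<^sub>C x"
    and scaleC_one: "1 *\<^sub>C x = x"
    and scaleR_scaleC: "scaleR r = scaleC (complex_of_real r)"

interpretation cvs: vector_space "scaleC :: complex \<Rightarrow> 'a::complex_vector \<Rightarrow> 'a"
  by unfold_locales (simp_all add: scaleC_add_right scaleC_add_left scaleC_scaleC scaleC_one)

class complex_inner = complex_vector + real_normed_vector +
  fixes cinner :: "'a \<Rightarrow> 'a \<Rightarrow> complex"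
  assumes cinner_commute: "cinner x y = cnj (cinner y x)"
    and cinner_add_left: "cinner (x + y) z = cinner x z + cinner y z"
    and cinner_scaleC_left: "cinner (c *\<^sub>C x) y = cnj c * cinner x y"
    and cinner_self_real: "cinner x x = complex_of_real (Re (cinner x x))"
    and cinner_ge_zero: "0 \<le> Re (cinner x x)"
    and cinner_eq_zero_iff: "cinner x x = 0 \<longleftrightarrow> x = 0"
    and norm_eq_sqrt_cinner: "norm x = sqrt (Re (cinner x x))"

text \<open>A complex Hilbert space is then a type of sort {complex_inner, complete_space}.\<close>

definition fd_subspace :: "'a::complex_vector set \<Rightarrow> bool" where
  "fd_subspace X \<longleftrightarrow> cvs.subspace X \<and> (\<exists>B. finite B \<and> X = cvs.span B)"

abbreviation cdim :: "'a::complex_vector set \<Rightarrow> nat" where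
  "cdim X \<equiv> cvs.dim X"

definition orthproj :: "'a::complex_inner set \<Rightarrow> 'a \<Rightarrow> 'a" where
  "orthproj X x = (THE p. p \<in> X \<and> (\<forall>y\<in>X. cinner y (x - p) = 0))"

definition fr_projection :: "('a::complex_inner \<Rightarrow> 'a) \<Rightarrow> bool" where
  "fr_projection T \<longleftrightarrow> T \<circ> T = T \<and> (\<forall>x y. cinner (T x) y = cinner x (T y))
     \<and> fd_subspace (range T)"

definition S_a :: "real \<Rightarrow> 'a::complex_inner set \<Rightarrow> 'a set \<Rightarrow> 'a set set" where
  "S_a a X Y = {Z. fd_subspace Z \<and>
     fr_projection (\<lambda>x. complex_of_real a *\<^sub>C (orthproj X x + orthproj Y x)
                        + complex_of_real (1 - 2 * a) *\<^sub>C orthproj Z x)}"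

end

(* Write P, Q, R for the orthogonal projections onto X, Y, Z and T for the projection
   a (P + Q) + (1 - 2 a) R, with range V.  Comparing (norm (T x))^2 = <x, T x> with the norm of the
   combination shows that no nonzero vector of X is orthogonal to Y, so dim X <= dim Y, and
   dim X = dim Y by symmetry.  Similar estimates give dim X = dim V if a < 1 and dim X = dim Z if
   a > 1.  Finally dim Z = dim V: the vectors of Z orthogonal to V, and those of V orthogonal to Z,
   are exactly the eigenvectors of P + Q for the eigenvalues 2 - 1/a and 1/a respectively, and
   P - Q maps each of these eigenspaces injectively into the other. *)
theory Submission
  imports Defs
begin

interpretation cvp: vector_space_pair
  "scaleC :: complex \<Rightarrow> 'a::complex_vector \<Rightarrow> 'a" "scaleC :: complex \<Rightarrow> 'b::complex_vector \<Rightarrow> 'b"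
  by unfold_locales

abbreviation clinear :: "('a::complex_vector \<Rightarrow> 'b::complex_vector) \<Rightarrow> bool" where
  "clinear f \<equiv> Vector_Spaces.linear (*\<^sub>C) (*\<^sub>C) f"

lemma clinearI:
  assumes "\<And>x y. f (x + y) = f x + f y" and "\<And>c x. f (c *\<^sub>C x) = c *\<^sub>C f x"
  shows "clinear f"
  using assms by (simp add: Vector_Spaces.linear_iff cvs.vector_space_axioms)

lemma cinner_add_right: "cinner x (y + z) = cinner x y + cinner x z"
  by (metis cinner_commute cinner_add_left complex_cnj_add)

lemma cinner_scaleC_right: "cinner x (c *\<^sub>C y) = c * cinner x y"
  by (metis cinner_commute cinner_scaleC_left complex_cnj_cnj complex_cnj_mult)

lemma cinner_zero_left [simp]: "cinner 0 x = 0"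
  by (metis add_0 cinner_add_left add_cancel_left_left)

lemma cinner_zero_right [simp]: "cinner x 0 = 0"
  by (metis cinner_commute cinner_zero_left complex_cnj_zero)

lemma cinner_minus_left: "cinner (- x) y = - cinner x y"
  by (metis add_eq_0_iff cinner_add_left cinner_zero_left neg_eq_iff_add_eq_0)

lemma cinner_minus_right: "cinner x (- y) = - cinner x y"
  by (metis cinner_commute cinner_minus_left complex_cnj_minus)

lemma cinner_diff_left: "cinner (x - y) z = cinner x z - cinner y z"
  using cinner_add_left[of x "- y" z] by (simp add: cinner_minus_left)

lemma cinner_diff_right: "cinner x (y - z) = cinner x y - cinner x z"
  using cinner_add_right[of x y "- z"] by (simp add: cinner_minus_right)

lemma cinner_scaleR_left: "cinner (r *\<^sub>R x) y = complex_of_real r * cinner x y"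
  by (simp add: scaleR_scaleC cinner_scaleC_left)

lemma cinner_scaleR_right: "cinner x (r *\<^sub>R y) = complex_of_real r * cinner x y"
  by (simp add: scaleR_scaleC cinner_scaleC_right)

lemmas cinner_simps = cinner_add_left cinner_add_right cinner_diff_left cinner_diff_right
  cinner_minus_left cinner_minus_right cinner_scaleR_left cinner_scaleR_right

lemma Re_cinner_commute: "Re (cinner x y) = Re (cinner y x)"
  by (subst cinner_commute) simp

lemma power2_norm_eq_cinner: "(norm x)\<^sup>2 = Re (cinner x x)"
  by (simp add: norm_eq_sqrt_cinner cinner_ge_zero)

lemma power2_norm_add:
  "(norm (x + y))\<^sup>2 = (norm x)\<^sup>2 + (norm y)\<^sup>2 + 2 * Re (cinner x y)"
  unfolding power2_norm_eq_cinner by (simp add: cinner_simps Re_cinner_commute[of y x])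

lemma power2_norm_diff:
  "(norm (x - y))\<^sup>2 = (norm x)\<^sup>2 + (norm y)\<^sup>2 - 2 * Re (cinner x y)"
  unfolding power2_norm_eq_cinner by (simp add: cinner_simps Re_cinner_commute[of y x])

lemma orthogonal_projection_onto_span_exists:
  assumes "finite B"
  shows "\<exists>p. \<forall>x. p x \<in> cvs.span B \<and> (\<forall>y\<in>cvs.span B. cinner y (x - p x) = 0)"
  using assms
proof (induction B rule: finite_induct)
  case empty
  show ?case by (auto simp: cvs.span_empty)
next
  case (insert v B)
  then obtain p where p_span: "\<And>x. p x \<in> cvs.span B"
    and p_orth: "\<And>x y. y \<in> cvs.span B \<Longrightarrow> cinner y (x - p x) = 0"
    by blast
  define w where "w = v - p v"
  show ?case
  proof (cases "w = 0")
    case True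
    then have "cvs.span (insert v B) = cvs.span B"
      using p_span[of v] by (simp add: w_def cvs.span_redundant)
    then show ?thesis using insert.IH by simp
  next
    case False
    define p' where "p' x = p x + (cinner w x / cinner w w) *\<^sub>C w" for x
    have ww: "cinner w w \<noteq> 0" using False cinner_eq_zero_iff by blast
    have w_span: "w \<in> cvs.span (insert v B)"
      unfolding w_def by (meson cvs.span_base cvs.span_diff cvs.span_mono insertI1 p_span subsetD subset_insertI)
    have w_orth: "cinner u w = 0" if "u \<in> cvs.span B" for u
      using p_orth[OF that, of v] by (simp add: w_def)
    have "p' x \<in> cvs.span (insert v B)" for x
      unfolding p'_def by (meson cvs.span_add cvs.span_mono cvs.span_scale p_span subsetD subset_insertI w_span)
    moreover have "cinner y (x - p' x) = 0" if y: "y \<in> cvs.span (insert v B)" for x y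
    proof -
      obtain k where k: "y - k *\<^sub>C v \<in> cvs.span B" using y cvs.span_insert by blast
      define u where "u = y - k *\<^sub>C v + k *\<^sub>C p v"
      have u: "u \<in> cvs.span B"
        unfolding u_def by (simp add: cvs.span_add cvs.span_scale k p_span)
      have y_eq: "y = u + k *\<^sub>C w"
        unfolding u_def w_def by (simp add: cvs.scale_right_diff_distrib)
      have "cinner w (p x) = 0"
        using w_orth[OF p_span[of x]] cinner_commute[of w "p x"] by simp
      then have "cinner w (x - p' x) = 0"
        using ww by (simp add: p'_def cinner_diff_right cinner_add_right cinner_scaleC_right)
      moreover have "cinner u (x - p' x) = 0"
        using p_orth[OF u, of x] w_orth[OF u]
        by (simp add: p'_def cinner_diff_right cinner_add_right cinner_scaleC_right)
      ultimately show ?thesis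
        unfolding y_eq by (simp add: cinner_add_left cinner_scaleC_left)
    qed
    ultimately show ?thesis by blast
  qed
qed

lemma orthproj_eqI:
  assumes "fd_subspace X" "p \<in> X" "\<forall>y\<in>X. cinner y (x - p) = 0"
  shows "orthproj X x = p"
  unfolding orthproj_def
proof (rule the_equality)
  show "p \<in> X \<and> (\<forall>y\<in>X. cinner y (x - p) = 0)" using assms by blast
next
  fix q assume q: "q \<in> X \<and> (\<forall>y\<in>X. cinner y (x - q) = 0)"
  have pq: "q - p \<in> X" using assms q by (simp add: fd_subspace_def cvs.subspace_diff)
  have "cinner (q - p) (q - p) = cinner (q - p) (x - p) - cinner (q - p) (x - q)"
    by (simp add: cinner_diff_right)
  also have "\<dots> = 0" using assms(3) q pq by simp
  finally have "q - p = 0" using cinner_eq_zero_iff by blast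
  then show "q = p" by simp
qed

lemma
  assumes "fd_subspace X"
  shows orthproj_in: "orthproj X x \<in> X"
    and orthproj_orthogonal: "y \<in> X \<Longrightarrow> cinner y (x - orthproj X x) = 0"
proof -
  obtain B where B: "finite B" "X = cvs.span B" using assms fd_subspace_def by blast
  obtain p where p: "\<forall>x. p x \<in> X \<and> (\<forall>y\<in>X. cinner y (x - p x) = 0)"
    using orthogonal_projection_onto_span_exists[OF B(1)] B(2) by auto
  then have "orthproj X x = p x" using orthproj_eqI[OF assms] by blast
  then show "orthproj X x \<in> X" "y \<in> X \<Longrightarrow> cinner y (x - orthproj X x) = 0"
    using p by auto
qed

lemma orthproj_id: "fd_subspace X \<Longrightarrow> x \<in> X \<Longrightarrow> orthproj X x = x"
  by (rule orthproj_eqI) simp_all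

lemma orthproj_idem: "fd_subspace X \<Longrightarrow> orthproj X (orthproj X x) = orthproj X x"
  by (simp add: orthproj_id orthproj_in)

lemma orthproj_eq_0_iff:
  assumes "fd_subspace X"
  shows "orthproj X x = 0 \<longleftrightarrow> (\<forall>y\<in>X. cinner y x = 0)"
proof
  assume "orthproj X x = 0"
  then show "\<forall>y\<in>X. cinner y x = 0" using orthproj_orthogonal[OF assms, of _ x] by simp
next
  assume "\<forall>y\<in>X. cinner y x = 0"
  moreover have "0 \<in> X" using assms by (simp add: fd_subspace_def cvs.subspace_0)
  ultimately show "orthproj X x = 0" using orthproj_eqI[OF assms, of 0 x] by simp
qed

lemma orthproj_add:
  assumes "fd_subspace X"
  shows "orthproj X (x + y) = orthproj X x + orthproj X y"
proof (rule orthproj_eqI[OF assms])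
  show "orthproj X x + orthproj X y \<in> X"
    using assms orthproj_in[OF assms] by (simp add: fd_subspace_def cvs.subspace_add)
  show "\<forall>z\<in>X. cinner z (x + y - (orthproj X x + orthproj X y)) = 0"
    by (simp add: add_diff_add cinner_add_right orthproj_orthogonal[OF assms])
qed

lemma orthproj_scaleC:
  assumes "fd_subspace X"
  shows "orthproj X (c *\<^sub>C x) = c *\<^sub>C orthproj X x"
proof (rule orthproj_eqI[OF assms])
  show "c *\<^sub>C orthproj X x \<in> X"
    using assms orthproj_in[OF assms] by (simp add: fd_subspace_def cvs.subspace_scale)
  have "c *\<^sub>C x - c *\<^sub>C orthproj X x = c *\<^sub>C (x - orthproj X x)"
    by (simp add: cvs.scale_right_diff_distrib)
  then show "\<forall>z\<in>X. cinner z (c *\<^sub>C x - c *\<^sub>C orthproj X x) = 0"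
    by (simp add: cinner_scaleC_right orthproj_orthogonal[OF assms])
qed

lemma orthproj_scaleR: "fd_subspace X \<Longrightarrow> orthproj X (r *\<^sub>R x) = r *\<^sub>R orthproj X x"
  by (simp add: scaleR_scaleC orthproj_scaleC)

lemma orthproj_diff: "fd_subspace X \<Longrightarrow> orthproj X (x - y) = orthproj X x - orthproj X y"
  by (metis orthproj_add diff_add_cancel eq_diff_eq)

lemma clinear_orthproj: "fd_subspace X \<Longrightarrow> clinear (orthproj X)"
  by (simp add: clinearI orthproj_add orthproj_scaleC)

lemma cinner_orthproj_left:
  assumes "fd_subspace X"
  shows "cinner (orthproj X x) y = cinner (orthproj X x) (orthproj X y)"
  using orthproj_orthogonal[OF assms orthproj_in[OF assms], of x y]
  by (simp add: cinner_diff_right)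

lemma orthproj_self_adjoint:
  assumes "fd_subspace X"
  shows "cinner (orthproj X x) y = cinner x (orthproj X y)"
  using cinner_orthproj_left[OF assms, of x y] cinner_orthproj_left[OF assms, of y x]
    cinner_commute[of x "orthproj X y"] cinner_commute[of "orthproj X x" "orthproj X y"]
  by simp

lemma Re_cinner_orthproj:
  assumes "fd_subspace X"
  shows "Re (cinner x (orthproj X x)) = (norm (orthproj X x))\<^sup>2"
  using cinner_orthproj_left[OF assms, of x x]
  by (simp add: power2_norm_eq_cinner Re_cinner_commute[of x])

lemma norm_orthproj_le:
  assumes "fd_subspace X"
  shows "(norm (orthproj X x))\<^sup>2 \<le> (norm x)\<^sup>2"
  using power2_norm_diff[of x "orthproj X x"] Re_cinner_orthproj[OF assms, of x]
    zero_le_power2[of "norm (x - orthproj X x)"]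
  by linarith

lemma orthproj_eigenvalue:
  assumes "fd_subspace X" "orthproj X x = c *\<^sub>R x"
  shows "c = 0 \<or> c = 1 \<or> x = 0"
proof -
  have "c *\<^sub>R x = (c * c) *\<^sub>R x"
    using orthproj_idem[OF assms(1), of x] orthproj_scaleR[OF assms(1), of c x]
    by (simp only: assms(2) scaleR_scaleR)
  then have "(c * (1 - c)) *\<^sub>R x = 0" by (simp add: algebra_simps)
  then show ?thesis by auto
qed

lemma fr_projection_orthproj_range:
  assumes "fr_projection T"
  shows "orthproj (range T) x = T x"
proof (rule orthproj_eqI)
  have idem: "T (T x) = T x" for x using assms by (simp add: fr_projection_def fun_eq_iff)
  have adj: "cinner (T x) y = cinner x (T y)" for x y using assms by (simp add: fr_projection_def)
  show "fd_subspace (range T)" "T x \<in> range T" using assms by (simp_all add: fr_projection_def)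
  show "\<forall>y\<in>range T. cinner y (x - T x) = 0"
    by (auto simp: cinner_diff_right adj idem)
qed

lemma fd_subspace_subset:
  assumes "fd_subspace A" "cvs.subspace S" "S \<subseteq> A"
  shows "fd_subspace S"
proof -
  obtain C where C: "finite C" "A = cvs.span C" using assms(1) fd_subspace_def by blast
  obtain B where B: "B \<subseteq> S" "cvs.independent B" "S \<subseteq> cvs.span B"
    by (rule cvs.basis_exists)
  have "finite B"
    using cvs.independent_span_bound[OF C(1) B(2)] B(1) assms(3) C(2) by auto
  moreover have "S = cvs.span B"
    using cvs.span_minimal[OF B(1) assms(2)] B(3) by blast
  ultimately show ?thesis using assms(2) fd_subspace_def by blast
qed

lemma dim_le_fd_subspace:
  assumes "fd_subspace B" "A \<subseteq> B"
  shows "cdim A \<le> cdim B"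
proof -
  obtain C where C: "finite C" "B = cvs.span C" using assms(1) fd_subspace_def by blast
  obtain BB where BB: "BB \<subseteq> B" "cvs.independent BB" "B \<subseteq> cvs.span BB" "card BB = cdim B"
    by (rule cvs.basis_exists)
  have "finite BB"
    using cvs.independent_span_bound[OF C(1) BB(2)] BB(1) C(2) by auto
  then show ?thesis
    using cvs.dim_le_card[of A BB] assms(2) BB(3,4) by auto
qed

lemma dim_le_if_clinear_inj_on:
  assumes B: "fd_subspace B" and A: "cvs.subspace A" and f: "clinear f"
    and maps: "f ` A \<subseteq> B" and inj: "\<forall>x\<in>A. f x = 0 \<longrightarrow> x = 0"
  shows "cdim A \<le> cdim B"
proof -
  obtain BA where BA: "BA \<subseteq> A" "cvs.independent BA" "A \<subseteq> cvs.span BA" "card BA = cdim A"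
    by (rule cvs.basis_exists)
  have span_BA: "cvs.span BA = A"
    using cvs.span_minimal[OF BA(1) A] BA(3) by (rule antisym)
  have inj_on: "inj_on f A"
    using cvp.linear_inj_on_iff_eq_0[OF f A] inj by blast
  have "cvs.independent (f ` BA)"
    using cvp.linear_independent_injective_image[OF f BA(2)] inj_on span_BA by simp
  then have "cdim (f ` BA) = card (f ` BA)"
    by (rule cvs.dim_eq_card_independent)
  also have "\<dots> = cdim A"
    using card_image[OF inj_on_subset[OF inj_on BA(1)]] BA(4) by simp
  finally have "cdim (f ` BA) = cdim A" .
  moreover have "cdim (f ` BA) \<le> cdim B"
    using dim_le_fd_subspace[OF B] BA(1) maps by blast
  ultimately show ?thesis by simp
qed

lemma dim_le_if_orthproj_inj_on:
  assumes "fd_subspace A" "fd_subspace B" "\<forall>x\<in>A. orthproj B x = 0 \<longrightarrow> x = 0"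
  shows "cdim A \<le> cdim B"
proof (rule dim_le_if_clinear_inj_on[OF assms(2) _ clinear_orthproj[OF assms(2)]])
  show "cvs.subspace A" using assms(1) by (simp add: fd_subspace_def)
  show "orthproj B ` A \<subseteq> B" using orthproj_in[OF assms(2)] by blast
qed (fact assms(3))

lemma dim_le_if_orthogonal_part_embeds:
  assumes A: "fd_subspace A" and B: "fd_subspace B" and D: "clinear D"
    and maps: "\<forall>x\<in>A. orthproj B x = 0 \<longrightarrow> D x \<in> B \<and> orthproj A (D x) = 0"
    and inj: "\<forall>x\<in>A. orthproj B x = 0 \<longrightarrow> D x = 0 \<longrightarrow> x = 0"
  shows "cdim A \<le> cdim B"
proof -
  define W where "W = A \<inter> {x. orthproj B x = 0}"
  have "cvs.subspace W"
    unfolding W_def using A cvp.linear_subspace_kernel[OF clinear_orthproj[OF B]]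
    by (simp add: fd_subspace_def cvs.subspace_inter)
  then have W: "fd_subspace W" using fd_subspace_subset[OF A] W_def by blast
  \<comment> \<open>\<open>D\<close> maps \<open>W\<close> into \<open>B \<inter> A\<^sup>\<bottom>\<close>, which is orthogonal to \<open>orthproj B ` A\<close>;
    hence \<open>F\<close> is injective.\<close>
  define F where "F x = orthproj B x + D (orthproj W x)" for x
  show ?thesis
  proof (rule dim_le_if_clinear_inj_on)
    have "clinear (D \<circ> orthproj W)"
      by (rule Vector_Spaces.linear_compose[OF clinear_orthproj[OF W] D])
    then show "clinear F"
      unfolding F_def using clinear_orthproj[OF B]
      by (simp add: o_def cvp.linear_compose_add)
    show "F ` A \<subseteq> B"
      using maps orthproj_in[OF W] orthproj_in[OF B] B
      by (auto simp: F_def W_def fd_subspace_def cvs.subspace_add)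
    show "\<forall>x\<in>A. F x = 0 \<longrightarrow> x = 0"
    proof (intro ballI impI)
      fix x assume x: "x \<in> A" and Fx: "F x = 0"
      define w where "w = D (orthproj W x)"
      have w: "w \<in> B" "orthproj A w = 0"
        using maps orthproj_in[OF W, of x] by (auto simp: w_def W_def)
      have Px: "orthproj B x = - w" using Fx by (simp add: F_def w_def eq_neg_iff_add_eq_0)
      have "cinner w w = - cinner (orthproj B w) x"
        using orthproj_self_adjoint[OF B, of w x] by (simp add: Px cinner_minus_right)
      also have "\<dots> = 0"
        using w orthproj_id[OF B] orthproj_eq_0_iff[OF A] x cinner_commute[of w x] by simp
      finally have "w = 0" using cinner_eq_zero_iff by blast
      then have "x \<in> W" using x Px by (simp add: W_def)
      then show "x = 0"
        using inj \<open>w = 0\<close> orthproj_id[OF W] by (simp add: W_def w_def)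
    qed
  qed (use A B in \<open>simp_all add: fd_subspace_def\<close>)
qed

lemma orthproj_sum_eigenvector_swap:
  assumes X: "fd_subspace X" and Y: "fd_subspace Y"
    and u: "orthproj X u + orthproj Y u = s *\<^sub>R u"
  shows "orthproj X (orthproj X u - orthproj Y u) + orthproj Y (orthproj X u - orthproj Y u)
           = (2 - s) *\<^sub>R (orthproj X u - orthproj Y u)"
proof -
  have "orthproj X (orthproj X u + orthproj Y u) = s *\<^sub>R orthproj X u"
    using u orthproj_scaleR[OF X] by simp
  then have PQ: "orthproj X (orthproj Y u) = (s - 1) *\<^sub>R orthproj X u"
    by (simp add: orthproj_add[OF X] orthproj_idem[OF X] algebra_simps)
  have "orthproj Y (orthproj X u + orthproj Y u) = s *\<^sub>R orthproj Y u"
    using u orthproj_scaleR[OF Y] by simp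
  then have QP: "orthproj Y (orthproj X u) = (s - 1) *\<^sub>R orthproj Y u"
    by (simp add: orthproj_add[OF Y] orthproj_idem[OF Y] algebra_simps)
  show ?thesis
    by (simp add: orthproj_diff[OF X] orthproj_diff[OF Y] orthproj_idem[OF X] orthproj_idem[OF Y]
        PQ QP algebra_simps scaleR_2)
qed

lemma orthproj_sum_eigenvector_eq_0:
  assumes X: "fd_subspace X" and Y: "fd_subspace Y"
    and u: "orthproj X u + orthproj Y u = s *\<^sub>R u" "orthproj X u = orthproj Y u"
    and s: "0 < s" "s < 2"
  shows "u = 0"
proof -
  have "(2::real) *\<^sub>R orthproj X u = s *\<^sub>R u"
    using u by (simp add: scaleR_2)
  then have "orthproj X u = (s / 2) *\<^sub>R u"
    by (metis scaleR_scaleR divide_inverse_commute scaleR_one divide_self_if zero_neq_numeral)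
  then show ?thesis using orthproj_eigenvalue[OF X] s by fastforce
qed

lemma orthproj_combination_norm_relation:
  assumes V: "fd_subspace V" and Z: "fd_subspace Z"
    and y: "orthproj V y = \<alpha> *\<^sub>R y + \<beta> *\<^sub>R orthproj Z y"
  shows "\<alpha> * (1 - \<alpha>) * (norm y)\<^sup>2 = \<beta> * (\<beta> + 2 * \<alpha> - 1) * (norm (orthproj Z y))\<^sup>2"
proof -
  have "(norm (orthproj V y))\<^sup>2 = Re (cinner y (orthproj V y))"
    by (simp add: Re_cinner_orthproj[OF V])
  also have "\<dots> = \<alpha> * (norm y)\<^sup>2 + \<beta> * (norm (orthproj Z y))\<^sup>2"
    by (simp add: y cinner_simps Re_cinner_orthproj[OF Z] power2_norm_eq_cinner)
  finally have 1: "(norm (orthproj V y))\<^sup>2 = \<alpha> * (norm y)\<^sup>2 + \<beta> * (norm (orthproj Z y))\<^sup>2" .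
  have "(norm (orthproj V y))\<^sup>2 = (norm (\<alpha> *\<^sub>R y))\<^sup>2 + (norm (\<beta> *\<^sub>R orthproj Z y))\<^sup>2
          + 2 * Re (cinner (\<alpha> *\<^sub>R y) (\<beta> *\<^sub>R orthproj Z y))"
    unfolding y by (rule power2_norm_add)
  also have "\<dots> = \<alpha>\<^sup>2 * (norm y)\<^sup>2 + \<beta>\<^sup>2 * (norm (orthproj Z y))\<^sup>2
          + 2 * \<alpha> * \<beta> * Re (cinner y (orthproj Z y))"
    by (simp add: power_mult_distrib cinner_scaleR_left cinner_scaleR_right)
  finally have "(norm (orthproj V y))\<^sup>2
          = \<alpha>\<^sup>2 * (norm y)\<^sup>2 + \<beta>\<^sup>2 * (norm (orthproj Z y))\<^sup>2 + 2 * \<alpha> * \<beta> * Re (cinner y (orthproj Z y))" .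
  then have 2: "(norm (orthproj V y))\<^sup>2
          = \<alpha>\<^sup>2 * (norm y)\<^sup>2 + (\<beta>\<^sup>2 + 2 * \<alpha> * \<beta>) * (norm (orthproj Z y))\<^sup>2"
    by (simp add: Re_cinner_orthproj[OF Z] algebra_simps)
  show ?thesis using 1 2 by (simp add: algebra_simps power2_eq_square)
qed

lemma dim_le_if_orthogonal_part_in_sum_eigenspace:
  assumes X: "fd_subspace X" and Y: "fd_subspace Y" and A: "fd_subspace A" and B: "fd_subspace B"
    and s: "0 < s" "s < 2"
    and A_eigen: "\<forall>x\<in>A. orthproj B x = 0 \<longrightarrow> orthproj X x + orthproj Y x = s *\<^sub>R x"
    and B_eigen: "\<forall>y. orthproj X y + orthproj Y y = (2 - s) *\<^sub>R y \<longrightarrow> y \<in> B \<and> orthproj A y = 0"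
  shows "cdim A \<le> cdim B"
proof (rule dim_le_if_orthogonal_part_embeds[OF A B])
  show "clinear (\<lambda>x. orthproj X x - orthproj Y x)"
    using clinear_orthproj[OF X] clinear_orthproj[OF Y] by (rule cvp.linear_compose_sub)
  show "\<forall>x\<in>A. orthproj B x = 0 \<longrightarrow>
      orthproj X x - orthproj Y x \<in> B \<and> orthproj A (orthproj X x - orthproj Y x) = 0"
    using A_eigen B_eigen orthproj_sum_eigenvector_swap[OF X Y] by blast
  show "\<forall>x\<in>A. orthproj B x = 0 \<longrightarrow> orthproj X x - orthproj Y x = 0 \<longrightarrow> x = 0"
  proof (intro ballI impI)
    fix x assume "x \<in> A" "orthproj B x = 0" "orthproj X x - orthproj Y x = 0"
    moreover from this have "orthproj X x + orthproj Y x = s *\<^sub>R x"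
      using A_eigen by blast
    ultimately show "x = 0" using orthproj_sum_eigenvector_eq_0[OF X Y _ _ s] by simp
  qed
qed

locale projection_combination =
  fixes X Y Z V :: "'a::complex_inner set" and a :: real
  assumes X: "fd_subspace X" and Y: "fd_subspace Y" and Z: "fd_subspace Z" and V: "fd_subspace V"
    and a_gt: "1/2 < a" and a_ne_1: "a \<noteq> 1"
    and orthproj_V: "orthproj V x = a *\<^sub>R (orthproj X x + orthproj Y x) + (1 - 2 * a) *\<^sub>R orthproj Z x"
begin

abbreviation "P \<equiv> orthproj X"
abbreviation "Q \<equiv> orthproj Y"
abbreviation "R \<equiv> orthproj Z"
abbreviation "T \<equiv> orthproj V"

lemma a_nonzero: "a \<noteq> 0"
  using a_gt by simp

lemma power2_norm_T:
  "(norm (T x))\<^sup>2 = a * ((norm (P x))\<^sup>2 + (norm (Q x))\<^sup>2) + (1 - 2 * a) * (norm (R x))\<^sup>2"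
proof -
  have "(norm (T x))\<^sup>2 = Re (cinner x (T x))" by (simp add: Re_cinner_orthproj[OF V])
  also have "\<dots> = a * (Re (cinner x (P x)) + Re (cinner x (Q x))) + (1 - 2 * a) * Re (cinner x (R x))"
    by (subst orthproj_V) (simp add: cinner_add_right cinner_scaleR_right)
  finally show ?thesis
    by (simp add: Re_cinner_orthproj[OF X] Re_cinner_orthproj[OF Y] Re_cinner_orthproj[OF Z])
qed

lemma sum_eigenvector_norm_relation:
  assumes "P y + Q y = s *\<^sub>R y"
  shows "a * s * (1 - a * s) * (norm y)\<^sup>2 = 2 * (1 - 2 * a) * (a * s - a) * (norm (R y))\<^sup>2"
proof -
  have "T y = (a * s) *\<^sub>R y + (1 - 2 * a) *\<^sub>R R y" using orthproj_V[of y] assms by simp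
  from orthproj_combination_norm_relation[OF V Z this] show ?thesis
    by (simp add: algebra_simps)
qed

lemma orthproj_Y_inj_on_X:
  assumes "x \<in> X" "Q x = 0"
  shows "x = 0"
proof -
  have "P x + Q x = 1 *\<^sub>R x" using assms by (simp add: orthproj_id[OF X])
  from sum_eigenvector_norm_relation[OF this] have "a * (1 - a) * (norm x)\<^sup>2 = 0" by simp
  then show "x = 0" using a_gt a_ne_1 by simp
qed

lemma dim_X_eq_Y: "cdim X = cdim Y"
proof -
  interpret swapped: projection_combination Y X Z V a
    using X Y Z V a_gt a_ne_1 orthproj_V by unfold_locales (simp_all add: add.commute)
  show ?thesis
    using dim_le_if_orthproj_inj_on[OF X Y] dim_le_if_orthproj_inj_on[OF Y X]
      orthproj_Y_inj_on_X swapped.orthproj_Y_inj_on_X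
    by (meson antisym)
qed

lemma V_orthogonal_part_sum_eigenvector:
  assumes "v \<in> V" "R v = 0"
  shows "P v + Q v = (1 / a) *\<^sub>R v"
proof -
  have "a *\<^sub>R (P v + Q v) = v" using orthproj_V[of v] assms orthproj_id[OF V] by simp
  then have "(1 / a) *\<^sub>R (a *\<^sub>R (P v + Q v)) = (1 / a) *\<^sub>R v" by simp
  then show ?thesis using a_nonzero by simp
qed

lemma sum_eigenvector_in_V:
  assumes "P y + Q y = (1 / a) *\<^sub>R y"
  shows "y \<in> V \<and> R y = 0"
proof -
  have "2 * (1 - 2 * a) * (1 - a) * (norm (R y))\<^sup>2 = 0"
    using sum_eigenvector_norm_relation[OF assms] a_nonzero by simp
  then have R: "R y = 0" using a_gt a_ne_1 by simp
  then have "T y = y" using orthproj_V[of y] assms a_nonzero by simp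
  then show ?thesis using R orthproj_in[OF V, of y] by simp
qed

lemma Z_orthogonal_part_sum_eigenvector:
  assumes "z \<in> Z" "T z = 0"
  shows "P z + Q z = (2 - 1 / a) *\<^sub>R z"
proof -
  have "a *\<^sub>R (P z + Q z) = (2 * a - 1) *\<^sub>R z"
    using orthproj_V[of z] assms orthproj_id[OF Z] by (simp add: algebra_simps)
  then have "(1 / a) *\<^sub>R (a *\<^sub>R (P z + Q z)) = ((1 / a) * (2 * a - 1)) *\<^sub>R z" by simp
  moreover have "(1 / a) * (2 * a - 1) = 2 - 1 / a" using a_nonzero by (simp add: field_simps)
  ultimately show ?thesis using a_nonzero by simp
qed

lemma sum_eigenvector_in_Z:
  assumes "P y + Q y = (2 - 1 / a) *\<^sub>R y"
  shows "y \<in> Z \<and> T y = 0"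
proof -
  have as: "a * (2 - 1 / a) = 2 * a - 1" using a_nonzero by (simp add: field_simps)
  have "(2 * a - 1) * (2 - 2 * a) * ((norm y)\<^sup>2 - (norm (R y))\<^sup>2) = 0"
    using sum_eigenvector_norm_relation[OF assms] unfolding as by (simp add: algebra_simps)
  then have "(norm y)\<^sup>2 = (norm (R y))\<^sup>2" using a_gt a_ne_1 by simp
  then have "(norm (y - R y))\<^sup>2 = 0"
    using power2_norm_diff[of y "R y"] Re_cinner_orthproj[OF Z, of y] by linarith
  then have Ry: "R y = y" by simp
  have "T y = (a * (2 - 1 / a)) *\<^sub>R y + (1 - 2 * a) *\<^sub>R y"
    using orthproj_V[of y] assms Ry by simp
  then have "T y = 0" unfolding as by (simp add: algebra_simps)
  then show ?thesis using Ry orthproj_in[OF Z, of y] by simp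
qed

lemma dim_Z_eq_V: "cdim Z = cdim V"
proof (rule antisym)
  have "0 < 1 / a" "1 / a < 2" using a_gt by (auto simp: field_simps)
  then have "0 < 2 - 1 / a" "2 - 1 / a < 2" by auto
  then show "cdim Z \<le> cdim V"
  proof (rule dim_le_if_orthogonal_part_in_sum_eigenspace[OF X Y Z V])
    show "\<forall>x\<in>Z. T x = 0 \<longrightarrow> P x + Q x = (2 - 1 / a) *\<^sub>R x"
      using Z_orthogonal_part_sum_eigenvector by blast
    show "\<forall>y. P y + Q y = (2 - (2 - 1 / a)) *\<^sub>R y \<longrightarrow> y \<in> V \<and> R y = 0"
      using sum_eigenvector_in_V by simp
  qed
  show "cdim V \<le> cdim Z"
  proof (rule dim_le_if_orthogonal_part_in_sum_eigenspace[OF X Y V Z])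
    show "\<forall>x\<in>V. R x = 0 \<longrightarrow> P x + Q x = (1 / a) *\<^sub>R x"
      using V_orthogonal_part_sum_eigenvector by blast
    show "\<forall>y. P y + Q y = (2 - 1 / a) *\<^sub>R y \<longrightarrow> y \<in> Z \<and> T y = 0"
      using sum_eigenvector_in_Z by blast
  qed fact+
qed

lemma orthproj_X_inj_on_V:
  assumes "a < 1" "v \<in> V" "P v = 0"
  shows "v = 0"
proof -
  have "(norm v)\<^sup>2 = a * (norm (Q v))\<^sup>2 + (1 - 2 * a) * (norm (R v))\<^sup>2"
    using power2_norm_T[of v] assms orthproj_id[OF V] by simp
  moreover have "a * (norm (Q v))\<^sup>2 \<le> a * (norm v)\<^sup>2"
    using norm_orthproj_le[OF Y] a_gt by (simp add: mult_left_mono)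
  moreover have "(1 - 2 * a) * (norm (R v))\<^sup>2 \<le> 0"
    using a_gt by (simp add: mult_nonpos_nonneg)
  ultimately have "(1 - a) * (norm v)\<^sup>2 \<le> 0" by (simp add: algebra_simps)
  then show "v = 0" using assms(1) by (simp add: mult_le_0_iff)
qed

lemma orthproj_V_inj_on_X:
  assumes "a < 1" "x \<in> X" "T x = 0"
  shows "x = 0"
proof -
  have "0 = a * ((norm x)\<^sup>2 + (norm (Q x))\<^sup>2) + (1 - 2 * a) * (norm (R x))\<^sup>2"
    using power2_norm_T[of x] assms orthproj_id[OF X] by simp
  moreover have "(1 - 2 * a) * (norm x)\<^sup>2 \<le> (1 - 2 * a) * (norm (R x))\<^sup>2"
    using norm_orthproj_le[OF Z] a_gt by (simp add: mult_left_mono_neg)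
  moreover have "0 \<le> a * (norm (Q x))\<^sup>2"
    using a_gt by simp
  ultimately have "(1 - a) * (norm x)\<^sup>2 \<le> 0" by (simp add: algebra_simps)
  then show "x = 0" using assms(1) by (simp add: mult_le_0_iff)
qed

lemma orthproj_X_inj_on_Z:
  assumes "1 < a" "z \<in> Z" "P z = 0"
  shows "z = 0"
proof -
  have "(norm (T z))\<^sup>2 = a * (norm (Q z))\<^sup>2 + (1 - 2 * a) * (norm z)\<^sup>2"
    using power2_norm_T[of z] assms orthproj_id[OF Z] by simp
  moreover have "a * (norm (Q z))\<^sup>2 \<le> a * (norm z)\<^sup>2"
    using norm_orthproj_le[OF Y] a_gt by (simp add: mult_left_mono)
  ultimately have "(norm (T z))\<^sup>2 \<le> (1 - a) * (norm z)\<^sup>2" by (simp add: algebra_simps)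
  then have "0 \<le> (1 - a) * (norm z)\<^sup>2" using zero_le_power2 order_trans by blast
  then show "z = 0" using assms(1) by (simp add: zero_le_mult_iff)
qed

lemma orthproj_Z_inj_on_X:
  assumes "1 < a" "x \<in> X" "R x = 0"
  shows "x = 0"
proof -
  have "(norm (T x))\<^sup>2 = a * ((norm x)\<^sup>2 + (norm (Q x))\<^sup>2)"
    using power2_norm_T[of x] assms orthproj_id[OF X] by simp
  moreover have "(norm (T x))\<^sup>2 \<le> (norm x)\<^sup>2"
    by (rule norm_orthproj_le[OF V])
  moreover have "0 \<le> a * (norm (Q x))\<^sup>2"
    using a_gt by simp
  ultimately have "(a - 1) * (norm x)\<^sup>2 \<le> 0" by (simp add: algebra_simps)
  then show "x = 0" using assms(1) by (simp add: mult_le_0_iff)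
qed

lemma dim_Z_eq_X: "cdim Z = cdim X"
proof (cases "a < 1")
  case True
  have "cdim V = cdim X"
    using dim_le_if_orthproj_inj_on[OF V X] dim_le_if_orthproj_inj_on[OF X V]
      orthproj_X_inj_on_V[OF True] orthproj_V_inj_on_X[OF True]
    by (meson antisym)
  then show ?thesis using dim_Z_eq_V by simp
next
  case False
  then have "1 < a" using a_ne_1 by simp
  then show ?thesis
    using dim_le_if_orthproj_inj_on[OF Z X] dim_le_if_orthproj_inj_on[OF X Z]
      orthproj_X_inj_on_Z orthproj_Z_inj_on_X
    by (meson antisym)
qed

end

lemma S_a_projection_combination:
  assumes "fd_subspace X" "fd_subspace Y" "1/2 < a" "a \<noteq> 1" "Z \<in> S_a a X Y"
  obtains V where "projection_combination X Y Z V a"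
proof
  define T where "T = (\<lambda>x. complex_of_real a *\<^sub>C (orthproj X x + orthproj Y x)
    + complex_of_real (1 - 2 * a) *\<^sub>C orthproj Z x)"
  have Z: "fd_subspace Z" and T: "fr_projection T"
    using assms(5) unfolding S_a_def T_def by blast+
  show "projection_combination X Y Z (range T) a"
  proof
    show "fd_subspace (range T)" using T by (simp add: fr_projection_def)
    show "orthproj (range T) x = a *\<^sub>R (orthproj X x + orthproj Y x) + (1 - 2 * a) *\<^sub>R orthproj Z x" for x
      unfolding fr_projection_orthproj_range[OF T] by (simp add: T_def scaleR_scaleC)
  qed (use assms Z in auto)
qed

theorem corollary2p5:
  fixes X Y :: "'a::{complex_inner, complete_space} set" and a :: real
  assumes "a > 1/2" and "a \<noteq> 1"
    and "fd_subspace X" and "fd_subspace Y"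
    and "S_a a X Y \<noteq> {}"
  shows "\<exists>k::nat. (fd_subspace (UNIV::'a set) \<longrightarrow> k \<le> cdim (UNIV::'a set))
           \<and> cdim X = k \<and> cdim Y = k \<and> (\<forall>Z\<in>S_a a X Y. cdim Z = k)"
proof (intro exI conjI ballI impI)
  show "cdim X \<le> cdim (UNIV :: 'a set)" if "fd_subspace (UNIV :: 'a set)"
    using dim_le_fd_subspace[OF that] by simp
  show "cdim X = cdim X" ..
  obtain Z0 where "Z0 \<in> S_a a X Y" using assms(5) by blast
  then obtain V0 where "projection_combination X Y Z0 V0 a"
    using S_a_projection_combination assms by blast
  then show "cdim Y = cdim X" using projection_combination.dim_X_eq_Y by metis
  show "cdim Z = cdim X" if Z: "Z \<in> S_a a X Y" for Z
  proof -
    obtain V where "projection_combination X Y Z V a"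
      using S_a_projection_combination[OF assms(3,4,1,2) Z] .
    then show ?thesis by (rule projection_combination.dim_Z_eq_X)
  qed
qed

end
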